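(* Let $S$ be a set of binary words all of the same length and the same weight, and let $\mathcal{L}$ be a list which is a homogeneous Gray code for $S$ and which is suffix partitioned. Then $\mathcal{L}$ is a recursive tail partitioned list.
   Context: The weight of a binary word is its number of 1's. Two binary words differ by a homogeneous transposition if one is obtained from the other by exchanging a 1 and a 0 such that no 1 occurs strictly between the two exchanged positions. A homogeneous Gray code for $S$ is a list containing each word of $S$ exactly once in which any two consecutive words differ by a homogeneous transposition. A list of binary words is suffix partitioned if, for every word $s$, the words of the list having $s$ as a suffix occupy consecutive positions in the list. The tail of a binary word is its unique suffix of the form $01^m$ ($m\ge 0$); the words $1^n$ have no tail. Notation: $\mathcal{A}\cdot w$ denotes the list obtained by appending the word $w$ to the end of each word of the list $\mathcal{A}$, and a comma denotes concatenation of lists. A list of same-length binary words is recursive tail partitioned if it is empty or consists of a single word, or if it has one of the forms $\mathcal{L}=\mathcal{L}_1\cdot 01^u,\ \mathcal{L}_2\cdot 01^{u+1},\ \dots,\ \mathcal{L}_{\ell+1}\cdot 01^{u+\ell}$ or $\mathcal{L}=\mathcal{L}_1\cdot 01^{u+\ell},\ \mathcal{L}_2\cdot 01^{u+\ell-1},\ \dots,\ \mathcal{L}_{\ell+1}\cdot 01^{u}$ for some integers $u,\ell\ge 0$, where each list $\mathcal{L}_i$ (possibly empty) is in turn recursive tail partitioned. (That is, words are grouped by tail, with tail lengths increasing or decreasing along the list, and the list obtained by deleting the common tail from each group is again of this kind.) *)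

theory Defs
  imports "HOL-Library.Sublist"
begin

text \<open>Binary words are lists of booleans, read left to right; True = 1, False = 0.\<close>

type_synonym word = "bool list"

definition weight :: "word \<Rightarrow> nat" where
  "weight w = length (filter id w)"

definition hom_transp :: "word \<Rightarrow> word \<Rightarrow> bool" where
  "hom_transp u v \<longleftrightarrow>
     (\<exists>i j. i < j \<and> j < length u \<and> u ! i \<noteq> u ! j \<and>
        (\<forall>k. i < k \<and> k < j \<longrightarrow> \<not> u ! k) \<and>
        v = u[i := u ! j, j := u ! i])"

definition hom_gray_code :: "word list \<Rightarrow> word set \<Rightarrow> bool" where
  "hom_gray_code L S \<longleftrightarrow>
     distinct L \<and> set L = S \<and>
     (\<forall>i. Suc i < length L \<longrightarrow> hom_transp (L ! i) (L ! Suc i))"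

definition suffix_partitioned :: "word list \<Rightarrow> bool" where
  "suffix_partitioned L \<longleftrightarrow>
     (\<forall>s i j k. i < k \<and> k < j \<and> j < length L \<and>
        suffix s (L ! i) \<and> suffix s (L ! j) \<longrightarrow> suffix s (L ! k))"

definition app_word :: "word list \<Rightarrow> word \<Rightarrow> word list" where
  "app_word A w = map (\<lambda>x. x @ w) A"

definition tail_word :: "nat \<Rightarrow> word" where
  "tail_word m = False # replicate m True"

inductive rec_tail_part :: "word list \<Rightarrow> bool" where
  rtp_nil: "rec_tail_part []"
| rtp_single: "rec_tail_part [w]"
| rtp_inc: "\<lbrakk> length Ls = Suc l; \<forall>i < length Ls. rec_tail_part (Ls ! i);
     L = concat (map (\<lambda>i. app_word (Ls ! i) (tail_word (u + i))) [0..<Suc l]);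
     \<forall>w \<in> set L. \<forall>w' \<in> set L. length w = length w' \<rbrakk> \<Longrightarrow> rec_tail_part L"
| rtp_dec: "\<lbrakk> length Ls = Suc l; \<forall>i < length Ls. rec_tail_part (Ls ! i);
     L = concat (map (\<lambda>i. app_word (Ls ! i) (tail_word (u + l - i))) [0..<Suc l]);
     \<forall>w \<in> set L. \<forall>w' \<in> set L. length w = length w' \<rbrakk> \<Longrightarrow> rec_tail_part L"

end

theory Submission
  imports Defs
begin

text \<open>A homogeneous transposition moves the last 0 of a word at most one place, so along the
  list the tail length m (the word ends in 01^m) changes by at most one per step.
  Suffix-partitioning makes the words with a given tail consecutive, and an integer
  sequence with unit steps whose level sets are intervals cannot turn, so the tail
  lengths are monotone along the list. Deleting the common tail from each block leaves
  a shorter list which is again suffix partitioned and again moves by homogeneous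
  transpositions, so induction on the word length applies.\<close>

definition trailing_ones :: "word \<Rightarrow> nat" where
  "trailing_ones w = length (takeWhile id (rev w))"

lemma trailing_ones_append_tail_word [simp]: "trailing_ones (p @ tail_word m) = m"
proof -
  have "takeWhile id (replicate m True @ False # rev p) = replicate m True"
    by (subst takeWhile_append2) auto
  then show ?thesis unfolding trailing_ones_def by (simp add: tail_word_def)
qed

lemma trailing_ones_decomp:
  assumes "False \<in> set w"
  obtains p where "w = p @ tail_word (trailing_ones w)"
proof -
  let ?d = "dropWhile id (rev w)"
  have "?d \<noteq> []" using assms by auto
  then obtain r where d: "?d = False # r"
    using hd_dropWhile[of id "rev w"] by (cases ?d) auto
  have "takeWhile id (rev w) = replicate (trailing_ones w) True"
    unfolding trailing_ones_def by (rule replicate_length_same[symmetric]) (auto dest: set_takeWhileD)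
  then have "rev w = replicate (trailing_ones w) True @ False # r"
    using takeWhile_dropWhile_id[of id "rev w"] d by simp
  from arg_cong[OF this, of rev] show thesis
    by (intro that[of "rev r"]) (simp add: tail_word_def)
qed

lemma trailing_ones_less_length:
  assumes "False \<in> set w"
  shows "trailing_ones w < length w"
proof -
  obtain p where "w = p @ tail_word (trailing_ones w)" using trailing_ones_decomp[OF assms] .
  from arg_cong[OF this, of length] show ?thesis by (simp add: tail_word_def)
qed

lemma suffix_tail_word_iff: "suffix (tail_word m) w \<longleftrightarrow> False \<in> set w \<and> trailing_ones w = m"
proof
  assume "suffix (tail_word m) w"
  then obtain p where w: "w = p @ tail_word m" by (auto simp: suffix_def)
  then have "trailing_ones w = m" by simp
  moreover have "False \<in> set w" using w by (simp add: tail_word_def)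
  ultimately show "False \<in> set w \<and> trailing_ones w = m" by blast
next
  assume "False \<in> set w \<and> trailing_ones w = m"
  then show "suffix (tail_word m) w" by (metis trailing_ones_decomp suffixI)
qed

lemma take_append_tail_word:
  assumes "False \<in> set w"
  shows "take (length w - Suc (trailing_ones w)) w @ tail_word (trailing_ones w) = w"
proof -
  obtain p where w: "w = p @ tail_word (trailing_ones w)" using trailing_ones_decomp[OF assms] .
  moreover have "length w - Suc (trailing_ones w) = length p"
    using arg_cong[OF w, of length] by (simp add: tail_word_def)
  ultimately show ?thesis by (metis append_eq_conv_conj)
qed

lemma zero_add_trailing_ones_less:
  assumes "p < length w" "\<not> w ! p"
  shows "p + trailing_ones w < length w"
proof (rule ccontr)
  let ?k = "length w - Suc p"
  assume "\<not> ?thesis"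
  then have "?k < length (takeWhile id (rev w))" using assms(1) unfolding trailing_ones_def by simp
  then have "rev w ! ?k" using takeWhile_nth set_takeWhileD nth_mem by (metis id_apply)
  then show False using assms by (simp add: rev_nth)
qed

lemma hom_transp_length: "hom_transp u v \<Longrightarrow> length v = length u"
  unfolding hom_transp_def by auto

lemma hom_transp_sym: "hom_transp u v \<Longrightarrow> hom_transp v u"
  unfolding hom_transp_def
proof (elim exE conjE)
  fix i j assume *: "i < j" "j < length u" "u ! i \<noteq> u ! j"
    "\<forall>k. i < k \<and> k < j \<longrightarrow> \<not> u ! k" "v = u[i := u ! j, j := u ! i]"
  show "\<exists>i j. i < j \<and> j < length v \<and> v ! i \<noteq> v ! j \<and>
        (\<forall>k. i < k \<and> k < j \<longrightarrow> \<not> v ! k) \<and> u = v[i := v ! j, j := v ! i]"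
    by (rule exI[of _ i], rule exI[of _ j]) (use * in \<open>auto simp: nth_list_update list_eq_iff_nth_eq\<close>)
qed

lemma hom_transp_has_zero: "hom_transp u v \<Longrightarrow> False \<in> set u"
  unfolding hom_transp_def by (metis (full_types) nth_mem order.strict_trans)

lemma hom_transp_append_cancel:
  assumes h: "hom_transp (p @ t) (q @ t)"
  shows "hom_transp p q"
proof -
  have lq: "length q = length p" using hom_transp_length[OF h] by simp
  from h obtain i j where *: "i < j" "j < length (p @ t)" "(p @ t) ! i \<noteq> (p @ t) ! j"
    "\<forall>k. i < k \<and> k < j \<longrightarrow> \<not> (p @ t) ! k" "q @ t = (p @ t)[i := (p @ t) ! j, j := (p @ t) ! i]"
    unfolding hom_transp_def by blast
  have "j < length p"
  proof (rule ccontr)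
    assume "\<not> j < length p"
    then have "(q @ t) ! j = (p @ t) ! j" using lq by (simp add: nth_append)
    then show False using * by simp
  qed
  with * have "q = p[i := p ! j, j := p ! i]" by (simp add: nth_append list_update_append)
  with * \<open>j < length p\<close> show ?thesis
    unfolding hom_transp_def by (intro exI[of _ i] exI[of _ j]) (simp add: nth_append)
qed

text \<open>The last 0 of u moves at most one place to the left: if it is not exchanged it stays,
  if it is exchanged with a later 1 it moves right, and if it is exchanged with an earlier 1
  the position just before it holds a 0 afterwards.\<close>
lemma hom_transp_trailing_ones_le:
  assumes h: "hom_transp u v"
  shows "trailing_ones v \<le> Suc (trailing_ones u)"
proof -
  obtain p where u: "u = p @ tail_word (trailing_ones u)"
    using trailing_ones_decomp[OF hom_transp_has_zero[OF h]] .
  define q where "q = length p"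
  have lu: "length u = q + Suc (trailing_ones u)"
    using arg_cong[OF u, of length] unfolding q_def by (simp add: tail_word_def)
  have "\<not> u ! q" unfolding q_def by (subst u) (simp add: tail_word_def)
  from h obtain i j where *: "i < j" "j < length u" "u ! i \<noteq> u ! j"
    "\<forall>k. i < k \<and> k < j \<longrightarrow> \<not> u ! k" "v = u[i := u ! j, j := u ! i]"
    unfolding hom_transp_def by blast
  have "\<exists>r. q \<le> Suc r \<and> r < length v \<and> \<not> v ! r"
  proof (cases "q = i \<or> q = j")
    case False
    then show ?thesis using * \<open>\<not> u ! q\<close> lu by (intro exI[of _ q]) (simp add: nth_list_update)
  next
    case True
    then show ?thesis
    proof
      assume "q = i"
      then show ?thesis using * \<open>\<not> u ! q\<close> by (intro exI[of _ j]) (auto simp: nth_list_update)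
    next
      assume "q = j"
      then show ?thesis using * \<open>\<not> u ! q\<close>
        by (intro exI[of _ "j - 1"]) (cases "i = j - 1"; auto simp: nth_list_update)
    qed
  qed
  then obtain r where "q \<le> Suc r" "r < length v" "\<not> v ! r" by blast
  with zero_add_trailing_ones_less[of r v] show ?thesis
    using lu hom_transp_length[OF h] by simp
qed

text \<open>A rise at a followed by a fall at c would make some value occur on both sides of
  a different one.\<close>
lemma unit_step_convex_no_peak:
  fixes g :: "nat \<Rightarrow> int"
  assumes step: "\<forall>x. Suc x < N \<longrightarrow> \<bar>g (Suc x) - g x\<bar> \<le> 1"
    and convex: "\<forall>a c b. a < c \<and> c < b \<and> b < N \<and> g a = g b \<longrightarrow> g c = g a"
    and up: "g a < g (Suc a)" and "a < c" "Suc c < N"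
  shows "g c \<le> g (Suc c)"
proof (rule ccontr)
  assume "\<not> ?thesis"
  then have down: "g (Suc c) < g c" by simp
  have step_between: "\<forall>x. Suc a \<le> x \<and> x < Suc c \<longrightarrow> \<bar>g (Suc x) - g x\<bar> \<le> 1"
  proof (intro allI impI)
    fix x assume "Suc a \<le> x \<and> x < Suc c"
    then have "Suc x < N" using \<open>Suc c < N\<close> by simp
    then show "\<bar>g (Suc x) - g x\<bar> \<le> 1" using step by blast
  qed
  show False
  proof (cases "g (Suc a) \<le> g (Suc c)")
    case True
    have "\<forall>x. Suc a \<le> x \<and> x < c \<longrightarrow> \<bar>g (Suc x) - g x\<bar> \<le> 1"
      using step_between by simp
    then obtain d where d: "Suc a \<le> d" "d \<le> c" "g d = g (Suc c)"
      using nat_intermed_int_val[of "Suc a" c g "g (Suc c)"] True down \<open>a < c\<close> by fastforce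
    then have "d < c" using down by (cases "d = c") auto
    then show False using convex[rule_format, of d c "Suc c"] \<open>Suc c < N\<close> d(3) down by simp
  next
    case False
    then have "g (Suc c) \<le> g a"
      using step[rule_format, of a] \<open>a < c\<close> \<open>Suc c < N\<close> up by (auto simp: abs_le_iff)
    have "\<forall>x. Suc a \<le> x \<and> x < Suc c \<longrightarrow> \<bar>- g (Suc x) - - g x\<bar> \<le> 1"
      using step_between by (simp add: abs_le_iff)
    then obtain d where d: "Suc a \<le> d" "d \<le> Suc c" "g d = g a"
      using nat_intermed_int_val[of "Suc a" "Suc c" "\<lambda>x. - g x" "- g a"] up \<open>g (Suc c) \<le> g a\<close> \<open>a < c\<close>
      by fastforce
    then have "Suc a < d" using up by (cases "d = Suc a") auto
    then show False using convex[rule_format, of a "Suc a" d] \<open>Suc c < N\<close> d up by simp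
  qed
qed

lemma unit_step_convex_monotone:
  fixes g :: "nat \<Rightarrow> int"
  assumes step: "\<forall>x. Suc x < N \<longrightarrow> \<bar>g (Suc x) - g x\<bar> \<le> 1"
    and convex: "\<forall>a c b. a < c \<and> c < b \<and> b < N \<and> g a = g b \<longrightarrow> g c = g a"
  shows "(\<forall>x. Suc x < N \<longrightarrow> g x \<le> g (Suc x)) \<or> (\<forall>x. Suc x < N \<longrightarrow> g (Suc x) \<le> g x)"
proof (rule ccontr)
  assume "\<not> ?thesis"
  then obtain a b where a: "Suc a < N" "g (Suc a) < g a" and b: "Suc b < N" "g b < g (Suc b)"
    unfolding de_Morgan_disj not_all not_imp not_le by blast
  show False
  proof (cases "b < a")
    case True
    with unit_step_convex_no_peak[OF step convex b(2) _ a(1)] a(2) show False by simp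
  next
    case False
    moreover have "a \<noteq> b" using a b by auto
    ultimately have "a < b" by simp
    have step': "\<forall>x. Suc x < N \<longrightarrow> \<bar>- g (Suc x) - - g x\<bar> \<le> 1"
      using step by (simp add: abs_le_iff)
    have convex': "\<forall>a c b. a < c \<and> c < b \<and> b < N \<and> - g a = - g b \<longrightarrow> - g c = - g a"
      unfolding neg_equal_iff_equal by (rule convex)
    have "- g a < - g (Suc a)" using a(2) by simp
    from unit_step_convex_no_peak[OF step' convex' this \<open>a < b\<close> b(1)]
    show False using b(2) by simp
  qed
qed

lemma convex_filter_decomp:
  assumes "\<forall>i k j. i < k \<and> k < j \<and> j < length L \<and> P (L ! i) \<and> P (L ! j) \<longrightarrow> P (L ! k)"
  shows "\<exists>xs zs. L = xs @ filter P L @ zs \<and> filter P xs = []"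
  using assms
proof (induction L)
  case Nil
  then show ?case by simp
next
  case (Cons x L)
  have "\<forall>i k j. i < k \<and> k < j \<and> j < length L \<and> P (L ! i) \<and> P (L ! j) \<longrightarrow> P (L ! k)"
  proof (intro allI impI)
    fix i k j assume "i < k \<and> k < j \<and> j < length L \<and> P (L ! i) \<and> P (L ! j)"
    then show "P (L ! k)" using Cons.prems[rule_format, of "Suc i" "Suc k" "Suc j"] by simp
  qed
  then obtain xs zs where L: "L = xs @ filter P L @ zs" and xs: "filter P xs = []"
    using Cons.IH by blast
  show ?case
  proof (cases "P x")
    case False
    then show ?thesis using L xs by (intro exI[of _ "x # xs"] exI[of _ zs]) simp
  next
    case True
    consider "xs = []" | "filter P L = []" | "xs \<noteq> []" "filter P L \<noteq> []" by blast
    then show ?thesis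
    proof cases
      case 1
      then show ?thesis using L True by (intro exI[of _ "[]"] exI[of _ zs]) simp
    next
      case 2
      then show ?thesis using True by (intro exI[of _ "[]"] exI[of _ L]) simp
    next
      case 3
      \<comment> \<open>x and the first element of filter P L satisfy P, but the head of xs between them does not.\<close>
      have "(x # L) ! Suc (length xs) = hd (filter P L)"
        using 3 by (subst L) (simp add: nth_append hd_conv_nth)
      moreover have "hd (filter P L) \<in> set (filter P L)" using 3(2) by (rule hd_in_set)
      ultimately have "P ((x # L) ! Suc (length xs))" by simp
      moreover have "\<not> P ((x # L) ! 1)"
        using 3 xs by (subst L) (cases xs; auto split: if_splits)
      moreover have "Suc (length xs) < length (x # L)"
        using 3 by (subst L) simp
      moreover have "1 < Suc (length xs)" using 3 by simp
      ultimately show ?thesis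
        using Cons.prems[rule_format, of 0 1 "Suc (length xs)"] True by simp
    qed
  qed
qed

lemma sublist_filter_if_convex:
  assumes "\<forall>i k j. i < k \<and> k < j \<and> j < length L \<and> P (L ! i) \<and> P (L ! j) \<longrightarrow> P (L ! k)"
  shows "sublist (filter P L) L"
  using convex_filter_decomp[OF assms] unfolding sublist_def by blast

lemma successively_sublist: "sublist xs ys \<Longrightarrow> successively P ys \<Longrightarrow> successively P xs"
  unfolding sublist_def by (auto simp: successively_append_iff)

lemma suffix_partitioned_sublist:
  assumes "sublist ys L" "suffix_partitioned L"
  shows "suffix_partitioned ys"
proof -
  obtain xs zs where L: "L = xs @ ys @ zs" using assms(1) unfolding sublist_def by blast
  show ?thesis
    unfolding suffix_partitioned_def
  proof (intro allI impI)
    fix s i j k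
    assume "i < k \<and> k < j \<and> j < length ys \<and> suffix s (ys ! i) \<and> suffix s (ys ! j)"
    then show "suffix s (ys ! k)"
      using assms(2)[unfolded suffix_partitioned_def, rule_format,
          of "length xs + i" "length xs + k" "length xs + j" s]
      by (simp add: L nth_append)
  qed
qed

lemma suffix_partitioned_append_cancel:
  assumes "suffix_partitioned (map (\<lambda>p. p @ t) M)"
  shows "suffix_partitioned M"
  unfolding suffix_partitioned_def
proof (intro allI impI)
  fix s i j k
  assume "i < k \<and> k < j \<and> j < length M \<and> suffix s (M ! i) \<and> suffix s (M ! j)"
  then show "suffix s (M ! k)"
    using assms[unfolded suffix_partitioned_def, rule_format, of i k j "s @ t"] by simp
qed

lemma sorted_key_split_max:
  assumes "sorted (map f xs)" "\<forall>x\<in>set xs. f x \<le> (m :: nat)"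
  shows "xs = filter (\<lambda>x. f x < m) xs @ filter (\<lambda>x. f x = m) xs"
  using assms
proof (induction xs)
  case Nil
  then show ?case by simp
next
  case (Cons x xs)
  show ?case
  proof (cases "f x < m")
    case True
    have "filter (\<lambda>x. f x < m) xs @ filter (\<lambda>x. f x = m) xs = xs"
      by (rule Cons.IH[symmetric]) (use Cons.prems in auto)
    then show ?thesis using True by simp
  next
    case False
    then have "f x = m" using Cons.prems by auto
    moreover have "\<forall>y\<in>set xs. f y = m" using Cons.prems \<open>f x = m\<close> by fastforce
    ultimately show ?thesis by simp
  qed
qed

lemma sorted_key_concat_filter:
  assumes "sorted (map f xs)" "\<forall>x\<in>set xs. f x < (m :: nat)"
  shows "xs = concat (map (\<lambda>i. filter (\<lambda>x. f x = i) xs) [0..<m])"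
  using assms
proof (induction m arbitrary: xs)
  case 0
  then show ?case by simp
next
  case (Suc m)
  let ?ys = "filter (\<lambda>x. f x < m) xs"
  have "xs = ?ys @ filter (\<lambda>x. f x = m) xs"
    by (rule sorted_key_split_max) (use Suc.prems in \<open>auto simp: less_Suc_eq_le\<close>)
  also have "?ys = concat (map (\<lambda>i. filter (\<lambda>x. f x = i) ?ys) [0..<m])"
    by (rule Suc.IH) (use Suc.prems in \<open>auto simp: sorted_filter\<close>)
  also have "\<dots> = concat (map (\<lambda>i. filter (\<lambda>x. f x = i) xs) [0..<m])"
    by (intro arg_cong[where f=concat] map_cong) (auto intro!: filter_cong)
  finally show ?case by simp
qed

lemma rev_upt_zero: "rev [0..<n] = map (\<lambda>i. n - Suc i) [0..<n]"
  by (rule nth_equalityI) (auto simp: rev_nth)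

lemma sorted_rev_key_concat_filter:
  assumes "sorted (rev (map f xs))" "\<forall>x\<in>set xs. f x \<le> (m :: nat)"
  shows "xs = concat (map (\<lambda>i. filter (\<lambda>x. f x = m - i) xs) [0..<Suc m])"
proof -
  have "rev xs = concat (map (\<lambda>i. filter (\<lambda>x. f x = i) (rev xs)) [0..<Suc m])"
    by (rule sorted_key_concat_filter) (use assms in \<open>auto simp: rev_map\<close>)
  from arg_cong[OF this, of rev]
  have "xs = rev (concat (map (\<lambda>i. filter (\<lambda>x. f x = i) (rev xs)) [0..<Suc m]))"
    by (simp only: rev_rev_ident)
  also have "\<dots> = concat (map (\<lambda>i. filter (\<lambda>x. f x = m - i) xs) [0..<Suc m])"
    by (simp add: rev_concat rev_map rev_filter rev_upt_zero o_def del: upt_Suc)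
  finally show ?thesis .
qed

text \<open>The list $\mathcal{L}_i$ of the paper for the tail $01^m$: the words of L ending
  in $01^m$, with that tail deleted; n is the common length of the words.\<close>
definition tail_block :: "nat \<Rightarrow> nat \<Rightarrow> word list \<Rightarrow> word list" where
  "tail_block n m L = map (take (n - Suc m)) (filter (\<lambda>w. trailing_ones w = m) L)"

lemma app_word_tail_block:
  assumes "\<forall>w\<in>set L. length w = n \<and> False \<in> set w"
  shows "app_word (tail_block n m L) (tail_word m) = filter (\<lambda>w. trailing_ones w = m) L"
proof -
  have "take (n - Suc m) w @ tail_word m = w" if "w \<in> set L" "trailing_ones w = m" for w
    using take_append_tail_word[of w] assms that by auto
  then show ?thesis
    unfolding app_word_def tail_block_def by (simp add: o_def) (rule map_idI; simp)
qed

lemma suffix_partitioned_trailing_ones_convex: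
  assumes "suffix_partitioned L" "\<forall>w\<in>set L. False \<in> set w"
  shows "\<forall>i k j. i < k \<and> k < j \<and> j < length L \<and> trailing_ones (L ! i) = m \<and>
    trailing_ones (L ! j) = m \<longrightarrow> trailing_ones (L ! k) = m"
proof (intro allI impI)
  fix i k j
  assume *: "i < k \<and> k < j \<and> j < length L \<and> trailing_ones (L ! i) = m \<and> trailing_ones (L ! j) = m"
  then have "suffix (tail_word m) (L ! i)" "suffix (tail_word m) (L ! j)"
    using assms(2) by (auto simp: suffix_tail_word_iff)
  then have "suffix (tail_word m) (L ! k)"
    using assms(1) * unfolding suffix_partitioned_def by blast
  then show "trailing_ones (L ! k) = m" by (simp add: suffix_tail_word_iff)
qed

lemma sublist_tail_block:
  assumes "\<forall>w\<in>set L. length w = n \<and> False \<in> set w" "suffix_partitioned L"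
  shows "sublist (map (\<lambda>p. p @ tail_word m) (tail_block n m L)) L"
  using sublist_filter_if_convex[OF suffix_partitioned_trailing_ones_convex[of L m]] assms
    app_word_tail_block[OF assms(1), of m]
  by (simp add: app_word_def)

lemma successively_hom_transp_tail_block:
  assumes "\<forall>w\<in>set L. length w = n \<and> False \<in> set w" "suffix_partitioned L"
    and "successively hom_transp L"
  shows "successively hom_transp (tail_block n m L)"
proof -
  have "successively hom_transp (map (\<lambda>p. p @ tail_word m) (tail_block n m L))"
    using successively_sublist[OF sublist_tail_block[OF assms(1,2)] assms(3)] .
  then show ?thesis
    unfolding successively_map by (rule successively_mono) (rule hom_transp_append_cancel)
qed

lemma suffix_partitioned_tail_block:
  assumes "\<forall>w\<in>set L. length w = n \<and> False \<in> set w" "suffix_partitioned L"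
  shows "suffix_partitioned (tail_block n m L)"
  using suffix_partitioned_sublist[OF sublist_tail_block[OF assms] assms(2)]
  by (rule suffix_partitioned_append_cancel)

lemma concat_tail_blocks:
  assumes "\<forall>w\<in>set L. length w = n \<and> False \<in> set w"
    and "L = concat (map (\<lambda>i. filter (\<lambda>w. trailing_ones w = h i) L) [0..<Suc l])"
  shows "L = concat (map (\<lambda>i. app_word (map (\<lambda>i. tail_block n (h i) L) [0..<Suc l] ! i)
    (tail_word (h i))) [0..<Suc l])"
proof -
  have blocks: "map (\<lambda>i. app_word (map (\<lambda>i. tail_block n (h i) L) [0..<Suc l] ! i) (tail_word (h i))) [0..<Suc l]
      = map (\<lambda>i. filter (\<lambda>w. trailing_ones w = h i) L) [0..<Suc l]"
    by (rule map_cong) (simp_all add: app_word_tail_block[OF assms(1)] del: upt_Suc)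
  show ?thesis unfolding blocks by (rule assms(2))
qed

lemma successively_hom_transp_has_zero:
  assumes "successively hom_transp L" "2 \<le> length L" "w \<in> set L"
  shows "False \<in> set w"
proof -
  obtain a where a: "a < length L" "w = L ! a" using assms(3) by (auto simp: in_set_conv_nth)
  show ?thesis
  proof (cases "Suc a < length L")
    case True
    then show ?thesis using successively_nth[OF assms(1)] hom_transp_has_zero a(2) by blast
  next
    case False
    then have "Suc (a - 1) = a" using a(1) assms(2) by simp
    then have "hom_transp (L ! (a - 1)) (L ! a)"
      using successively_nth[OF assms(1), of "a - 1"] a(1) by simp
    then show ?thesis using hom_transp_has_zero hom_transp_sym a(2) by blast
  qed
qed

lemma sorted_or_rev_sorted_trailing_ones:
  assumes "successively hom_transp L" "suffix_partitioned L" "\<forall>w\<in>set L. False \<in> set w"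
  shows "sorted (map trailing_ones L) \<or> sorted (rev (map trailing_ones L))"
proof -
  define g where "g x = int (trailing_ones (L ! x))" for x
  have "\<forall>x. Suc x < length L \<longrightarrow> \<bar>g (Suc x) - g x\<bar> \<le> 1"
  proof (intro allI impI)
    fix x assume "Suc x < length L"
    then have "hom_transp (L ! x) (L ! Suc x)" by (rule successively_nth[OF assms(1)])
    then have "trailing_ones (L ! Suc x) \<le> Suc (trailing_ones (L ! x))"
      "trailing_ones (L ! x) \<le> Suc (trailing_ones (L ! Suc x))"
      using hom_transp_trailing_ones_le hom_transp_sym by blast+
    then show "\<bar>g (Suc x) - g x\<bar> \<le> 1" unfolding g_def by arith
  qed
  moreover have "\<forall>a c b. a < c \<and> c < b \<and> b < length L \<and> g a = g b \<longrightarrow> g c = g a"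
  proof (intro allI impI)
    fix a c b assume "a < c \<and> c < b \<and> b < length L \<and> g a = g b"
    then show "g c = g a"
      using suffix_partitioned_trailing_ones_convex[OF assms(2,3), rule_format,
          of a c b "trailing_ones (L ! a)"]
      unfolding g_def by simp
  qed
  ultimately have "(\<forall>x. Suc x < length L \<longrightarrow> g x \<le> g (Suc x)) \<or>
      (\<forall>x. Suc x < length L \<longrightarrow> g (Suc x) \<le> g x)"
    by (rule unit_step_convex_monotone)
  then show ?thesis unfolding sorted_rev_iff_nth_Suc unfolding sorted_iff_nth_Suc g_def by simp
qed

lemma rec_tail_part_if_tail_blocks:
  assumes words: "\<forall>w\<in>set L. length w = n \<and> False \<in> set w"
    and blocks: "\<And>m. rec_tail_part (tail_block n m L)"
    and "sorted (map trailing_ones L) \<or> sorted (rev (map trailing_ones L))"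
  shows "rec_tail_part L"
proof -
  have tails: "\<forall>w\<in>set L. trailing_ones w < n"
    using words trailing_ones_less_length by auto
  have lengths: "\<forall>w\<in>set L. \<forall>w'\<in>set L. length w = length w'" using words by simp
  have blocks_nth: "\<forall>i<length (map (\<lambda>i. tail_block n (h i) L) [0..<Suc n]).
      rec_tail_part (map (\<lambda>i. tail_block n (h i) L) [0..<Suc n] ! i)" for h
    using blocks by (simp del: upt_Suc)
  from assms(3) show ?thesis
  proof (elim disjE)
    assume "sorted (map trailing_ones L)"
    have "L = concat (map (\<lambda>i. filter (\<lambda>w. trailing_ones w = i) L) [0..<Suc n])"
      by (rule sorted_key_concat_filter) (use \<open>sorted _\<close> tails in auto)
    then have concat_inc: "L = concat (map (\<lambda>i. app_word (map (\<lambda>i. tail_block n i L) [0..<Suc n] ! i)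
        (tail_word (0 + i))) [0..<Suc n])"
      unfolding add_0 by (rule concat_tail_blocks[OF words, of "\<lambda>i. i"])
    show ?thesis by (rule rtp_inc[OF _ blocks_nth concat_inc lengths]) simp
  next
    assume "sorted (rev (map trailing_ones L))"
    have "L = concat (map (\<lambda>i. filter (\<lambda>w. trailing_ones w = n - i) L) [0..<Suc n])"
      by (rule sorted_rev_key_concat_filter) (use \<open>sorted _\<close> tails in \<open>auto simp: less_imp_le\<close>)
    then have concat_dec: "L = concat (map (\<lambda>i. app_word (map (\<lambda>i. tail_block n (n - i) L) [0..<Suc n] ! i)
        (tail_word (0 + n - i))) [0..<Suc n])"
      unfolding add_0 by (rule concat_tail_blocks[OF words, of "\<lambda>i. n - i"])
    show ?thesis by (rule rtp_dec[OF _ blocks_nth concat_dec lengths]) simp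
  qed
qed

lemma rec_tail_part_if_successively_hom_transp:
  assumes "\<forall>w\<in>set L. length w = n" "successively hom_transp L" "suffix_partitioned L"
  shows "rec_tail_part L"
  using assms
proof (induction n arbitrary: L rule: less_induct)
  case (less n L)
  show ?case
  proof (cases "2 \<le> length L")
    case False
    then have "L = [] \<or> (\<exists>w. L = [w])" by (cases L) (auto simp: Suc_le_eq)
    then show ?thesis by (auto intro: rec_tail_part.intros)
  next
    case True
    then have zeros: "\<forall>w\<in>set L. False \<in> set w"
      using less.prems(2) successively_hom_transp_has_zero by blast
    then have words: "\<forall>w\<in>set L. length w = n \<and> False \<in> set w"
      using less.prems(1) by simp
    from True obtain w where "w \<in> set L" by (cases L) auto
    then have "0 < n" using words length_pos_if_in_set by fastforce
    have tail_blocks: "rec_tail_part (tail_block n m L)" for m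
    proof (rule less.IH)
      show "n - Suc m < n" using \<open>0 < n\<close> by simp
      show "\<forall>w\<in>set (tail_block n m L). length w = n - Suc m"
        using less.prems(1) by (auto simp: tail_block_def)
      show "successively hom_transp (tail_block n m L)"
        using successively_hom_transp_tail_block[OF words less.prems(3,2)] .
      show "suffix_partitioned (tail_block n m L)"
        using suffix_partitioned_tail_block[OF words less.prems(3)] .
    qed
    show ?thesis
      using sorted_or_rev_sorted_trailing_ones[OF less.prems(2,3) zeros]
      by (rule rec_tail_part_if_tail_blocks[OF words tail_blocks])
  qed
qed

theorem theorem1:
  fixes S :: "word set" and L :: "word list" and n k :: nat
  assumes "\<forall>w \<in> S. length w = n"
    and "\<forall>w \<in> S. weight w = k"
    and "hom_gray_code L S"
    and "suffix_partitioned L"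
  shows "rec_tail_part L"
proof -
  have "\<forall>w\<in>set L. length w = n" "successively hom_transp L"
    using assms(1,3) unfolding hom_gray_code_def successively_conv_nth by auto
  then show ?thesis using assms(4) by (rule rec_tail_part_if_successively_hom_transp)
qed

end
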